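(* Let $n\ge 5$, let $M$ be a matching of the complete graph $K_n$, and let $G=K_n\setminus M$ be the graph obtained from $K_n$ by deleting the edges of $M$. If $M$ is a perfect matching, then $\gamma_3(G)=4$; otherwise $\gamma_3(G)=3$.
   Context: In a graph $G=(V,E)$, a vertex dominates itself and its neighbours. A set $S\subseteq V$ is a three dominating set of $G$ if every vertex in $V\setminus S$ is dominated by at least three vertices of $S$ (equivalently, every vertex of $V\setminus S$ has at least three neighbours in $S$). The three domination number $\gamma_3(G)$ is the minimum cardinality of a three dominating set of $G$. *)

theory Defs
  imports Main
begin

text \<open>Simple graphs on a finite vertex set V given by a symmetric irreflexive
adjacency relation E. Edges of K_n are 2-element subsets of V.\<close>

definition is_matching :: "'a set \<Rightarrow> 'a set set \<Rightarrow> bool" where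
  "is_matching V M \<longleftrightarrow>
     (\<forall>e\<in>M. e \<subseteq> V \<and> card e = 2) \<and>
     (\<forall>e\<in>M. \<forall>f\<in>M. e \<noteq> f \<longrightarrow> e \<inter> f = {})"

definition is_perfect_matching :: "'a set \<Rightarrow> 'a set set \<Rightarrow> bool" where
  "is_perfect_matching V M \<longleftrightarrow> is_matching V M \<and> \<Union>M = V"

definition complete_minus :: "'a set \<Rightarrow> 'a set set \<Rightarrow> 'a \<Rightarrow> 'a \<Rightarrow> bool" where
  "complete_minus V M u v \<longleftrightarrow> u \<in> V \<and> v \<in> V \<and> u \<noteq> v \<and> {u, v} \<notin> M"

definition three_dominating :: "'a set \<Rightarrow> ('a \<Rightarrow> 'a \<Rightarrow> bool) \<Rightarrow> 'a set \<Rightarrow> bool" where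
  "three_dominating V E S \<longleftrightarrow> S \<subseteq> V \<and> (\<forall>v \<in> V - S. 3 \<le> card {u \<in> S. E v u})"

definition gamma3 :: "'a set \<Rightarrow> ('a \<Rightarrow> 'a \<Rightarrow> bool) \<Rightarrow> nat" where
  "gamma3 V E = Min (card ` {S. three_dominating V E S})"

end

theory Submission
  imports Defs
begin

text \<open>
A vertex outside a three dominating set S has at least three neighbours in S, so
|S| >= 3 as soon as S is not all of V. Call S closed under M if every
edge of M meeting S lies inside S. A closed S with at least three vertices is three
dominating, since every vertex outside S is then adjacent to all of S. Conversely, a
three dominating S of size at most 3 is closed: the M-partner t of a vertex s of S
lying outside S would see at most |S| - 1 <= 2 vertices of S. If M is
perfect, a closed set is a disjoint union of edges of M, hence of even size, which
rules out size 3; two edges of M give a closed set of size 4. If some vertex w is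
missed by M, then w together with an edge of M (or any 3 vertices, if M is empty)
is closed of size 3.
\<close>

definition matching_closed :: "'a set set \<Rightarrow> 'a set \<Rightarrow> bool" where
  "matching_closed M S \<longleftrightarrow> (\<forall>e\<in>M. \<forall>x\<in>e. x \<in> S \<longrightarrow> e \<subseteq> S)"

lemma matching_closed_Un:
  "matching_closed M A \<Longrightarrow> matching_closed M B \<Longrightarrow> matching_closed M (A \<union> B)"
  unfolding matching_closed_def by blast

lemma matching_closed_if_disjoint: "S \<inter> \<Union>M = {} \<Longrightarrow> matching_closed M S"
  unfolding matching_closed_def by blast

lemma matching_edge_eq:
  assumes "is_matching V M" "e \<in> M" "f \<in> M" "x \<in> e" "x \<in> f"
  shows "e = f"
  using assms unfolding is_matching_def by blast

lemma matching_edgeE: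
  assumes "is_matching V M" "e \<in> M"
  obtains a b where "e = {a, b}" "a \<noteq> b" "a \<in> V" "b \<in> V"
proof -
  have "e \<subseteq> V" "card e = 2" using assms unfolding is_matching_def by auto
  then show thesis using that unfolding card_2_iff by blast
qed

lemma matching_closed_edge:
  assumes "is_matching V M" "e \<in> M"
  shows "matching_closed M e"
  using matching_edge_eq[OF assms(1) _ assms(2)] unfolding matching_closed_def by blast

lemma three_dominating_card_ge:
  assumes "three_dominating V E S" "3 \<le> card V"
  shows "3 \<le> card S"
proof (rule ccontr)
  assume small: "\<not> 3 \<le> card S"
  have "finite V" using assms(2) card.infinite by fastforce
  have SV: "S \<subseteq> V" using assms(1) unfolding three_dominating_def by blast
  have "S \<noteq> V" using small assms(2) by auto
  with SV obtain v where v: "v \<in> V - S" by blast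
  have "3 \<le> card {u \<in> S. E v u}" using assms(1) v unfolding three_dominating_def by blast
  also have "\<dots> \<le> card S" using SV \<open>finite V\<close> by (intro card_mono) (auto dest: finite_subset)
  finally show False using small by simp
qed

lemma matching_closed_three_dominating:
  assumes "S \<subseteq> V" "3 \<le> card S" "matching_closed M S"
  shows "three_dominating V (complete_minus V M) S"
  unfolding three_dominating_def
proof (intro conjI ballI)
  fix v assume v: "v \<in> V - S"
  have "{v, u} \<notin> M" if "u \<in> S" for u
    using assms(3) that v unfolding matching_closed_def by blast
  then have "{u \<in> S. complete_minus V M v u} = S"
    using assms(1) v unfolding complete_minus_def by auto
  then show "3 \<le> card {u \<in> S. complete_minus V M v u}" using assms(2) by simp
qed (fact assms(1))

lemma three_dominating_matching_closed:
  assumes "is_matching V M" "finite V" "three_dominating V (complete_minus V M) S"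
    and "card S \<le> 3"
  shows "matching_closed M S"
  unfolding matching_closed_def
proof (intro ballI impI)
  fix e s assume e: "e \<in> M" and s: "s \<in> e" "s \<in> S"
  obtain a b where ab: "e = {a, b}" "a \<in> V" "b \<in> V"
    using matching_edgeE[OF assms(1) e] by blast
  obtain t where st: "e = {s, t}" "s \<in> S" "t \<in> V"
    using ab s by (cases "s = a") (auto simp: insert_commute)
  have SV: "S \<subseteq> V" using assms(3) unfolding three_dominating_def by blast
  have "t \<in> S"
  proof (rule ccontr)
    assume "t \<notin> S"
    then have "3 \<le> card {u \<in> S. complete_minus V M t u}"
      using assms(3) st(3) unfolding three_dominating_def by blast
    also have "\<dots> \<le> card (S - {s})"
      using e st SV assms(2)
      by (intro card_mono) (auto simp: complete_minus_def insert_commute dest: finite_subset)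
    also have "\<dots> < 3" using st(2) assms(4) SV assms(2)
      by (simp add: card_Diff_singleton finite_subset)
    finally show False by simp
  qed
  with st show "e \<subseteq> S" by blast
qed

lemma matching_closed_card_even:
  assumes "is_matching V M" "S \<subseteq> \<Union>M" "matching_closed M S"
  shows "even (card S)"
proof -
  define C where "C = {e \<in> M. e \<subseteq> S}"
  have edge_card: "card e = 2" if "e \<in> C" for e
    using assms(1) that unfolding is_matching_def C_def by blast
  have "S \<subseteq> \<Union>C"
  proof
    fix x assume "x \<in> S"
    with assms(2) obtain e where e: "e \<in> M" "x \<in> e" by blast
    with assms(3) \<open>x \<in> S\<close> have "e \<subseteq> S" unfolding matching_closed_def by blast
    with e show "x \<in> \<Union>C" unfolding C_def by blast
  qed
  then have "S = \<Union>C" unfolding C_def by blast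
  moreover have "pairwise disjnt C"
  proof -
    have "\<forall>e\<in>M. \<forall>f\<in>M. e \<noteq> f \<longrightarrow> e \<inter> f = {}"
      using assms(1) unfolding is_matching_def by (rule conjunct2)
    then show ?thesis unfolding pairwise_def disjnt_def C_def by blast
  qed
  moreover have "finite e" if "e \<in> C" for e
    using edge_card[OF that] by (intro card_ge_0_finite) simp
  ultimately have "card S = sum card C" by (simp add: card_Union_disjoint)
  also have "\<dots> = 2 * card C" using edge_card by simp
  finally show ?thesis by simp
qed

lemma perfect_matching_closed_card_4:
  assumes "is_perfect_matching V M" "3 \<le> card V"
  obtains S where "S \<subseteq> V" "card S = 4" "matching_closed M S"
proof -
  have m: "is_matching V M" and cover: "\<Union>M = V"
    using assms(1) unfolding is_perfect_matching_def by blast+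
  have edge: "e \<subseteq> V \<and> card e = 2" if "e \<in> M" for e
    using m that unfolding is_matching_def by blast
  have "V \<noteq> {}" using assms(2) by auto
  then obtain e where e: "e \<in> M" using cover by blast
  have "\<not> V \<subseteq> e"
  proof
    assume "V \<subseteq> e"
    then have "card V \<le> card e" using edge[OF e] by (intro card_mono) (auto intro: card_ge_0_finite)
    then show False using edge[OF e] assms(2) by simp
  qed
  then obtain c where "c \<in> V" "c \<notin> e" by blast
  then obtain f where f: "f \<in> M" "f \<noteq> e" using cover by blast
  have "e \<inter> f = {}" using m e f unfolding is_matching_def by blast
  then have "card (e \<union> f) = card e + card f"
    using edge e f by (intro card_Un_disjoint) (auto intro: card_ge_0_finite)
  also have "\<dots> = 4" using edge e f by simp
  finally have "card (e \<union> f) = 4" .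
  moreover have "matching_closed M (e \<union> f)"
    using matching_closed_Un matching_closed_edge[OF m] e f(1) by blast
  moreover have "e \<union> f \<subseteq> V" using edge e f(1) by blast
  ultimately show thesis using that by blast
qed

lemma non_perfect_matching_closed_card_3:
  assumes "is_matching V M" "\<not> is_perfect_matching V M" "3 \<le> card V"
  obtains S where "S \<subseteq> V" "card S = 3" "matching_closed M S"
proof (cases "M = {}")
  case True
  obtain S where "S \<subseteq> V" "card S = 3" using obtain_subset_with_card_n[OF assms(3)] by blast
  moreover have "matching_closed M S" using True by (intro matching_closed_if_disjoint) simp
  ultimately show thesis using that by blast
next
  case False
  then obtain e where e: "e \<in> M" by blast
  obtain a b where ab: "e = {a, b}" "a \<noteq> b" "a \<in> V" "b \<in> V"
    using matching_edgeE[OF assms(1) e] .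
  have "\<Union>M \<subseteq> V" using assms(1) unfolding is_matching_def by blast
  with assms(1,2) obtain w where w: "w \<in> V" "w \<notin> \<Union>M"
    unfolding is_perfect_matching_def by blast
  have "w \<notin> e" using w(2) e by blast
  then have "card (e \<union> {w}) = 3" using ab by simp
  moreover have "matching_closed M (e \<union> {w})"
  proof (rule matching_closed_Un)
    show "matching_closed M e" using matching_closed_edge[OF assms(1) e] .
    show "matching_closed M {w}" using w(2) by (intro matching_closed_if_disjoint) blast
  qed
  moreover have "e \<union> {w} \<subseteq> V" using ab w(1) by blast
  ultimately show thesis using that by blast
qed

lemma gamma3_eqI:
  assumes "finite V" "three_dominating V E S" "card S = k"
    and "\<And>T. three_dominating V E T \<Longrightarrow> k \<le> card T"
  shows "gamma3 V E = k"
  unfolding gamma3_def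
proof (rule Min_eqI)
  have "{S. three_dominating V E S} \<subseteq> Pow V" unfolding three_dominating_def by auto
  then show "finite (card ` {S. three_dominating V E S})"
    using assms(1) by (auto dest: finite_subset)
qed (use assms(2-4) in auto)

lemma perfect_matching_three_dominating_card_ge:
  assumes "is_perfect_matching V M" "3 \<le> card V"
    and T: "three_dominating V (complete_minus V M) T"
  shows "4 \<le> card T"
proof -
  have m: "is_matching V M" using assms(1) unfolding is_perfect_matching_def by blast
  have "finite V" using assms(2) card.infinite by fastforce
  have "card T \<noteq> 3"
  proof
    assume "card T = 3"
    then have "matching_closed M T"
      by (intro three_dominating_matching_closed[OF m \<open>finite V\<close> T]) simp
    moreover have "T \<subseteq> \<Union>M"
      using T assms(1) unfolding three_dominating_def is_perfect_matching_def by blast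
    ultimately have "even (card T)" by (intro matching_closed_card_even[OF m])
    with \<open>card T = 3\<close> show False by simp
  qed
  with three_dominating_card_ge[OF T assms(2)] show ?thesis by simp
qed

theorem theorem2p7:
  fixes V :: "'a set" and M :: "'a set set"
  assumes "finite V" and "card V \<ge> 5" and "is_matching V M"
  shows "(is_perfect_matching V M \<longrightarrow> gamma3 V (complete_minus V M) = 4) \<and>
         (\<not> is_perfect_matching V M \<longrightarrow> gamma3 V (complete_minus V M) = 3)"
proof -
  have V3: "3 \<le> card V" using assms(2) by simp
  show ?thesis
  proof (intro conjI impI)
    assume perfect: "is_perfect_matching V M"
    then obtain S where S: "S \<subseteq> V" "card S = 4" "matching_closed M S"
      using perfect_matching_closed_card_4 V3 by blast
    show "gamma3 V (complete_minus V M) = 4"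
      by (rule gamma3_eqI[OF assms(1) matching_closed_three_dominating[OF S(1) _ S(3)] S(2)])
        (simp_all add: S(2) perfect_matching_three_dominating_card_ge[OF perfect V3])
  next
    assume "\<not> is_perfect_matching V M"
    then obtain S where S: "S \<subseteq> V" "card S = 3" "matching_closed M S"
      using non_perfect_matching_closed_card_3[OF assms(3) _ V3] by blast
    show "gamma3 V (complete_minus V M) = 3"
      by (rule gamma3_eqI[OF assms(1) matching_closed_three_dominating[OF S(1) _ S(3)] S(2)])
        (simp_all add: S(2) three_dominating_card_ge[OF _ V3])
  qed
qed

end
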